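(* Let $\nu\in\mathbb{N}$, let $(X,d)$ be a complete $\nu$-generalized metric space, and let $T:X\to X$ be sequentially continuous and asymptotically regular. For $\gamma>0$ define $m:X\times X\to[0,\infty)$ by $m(x,y)=d(x,y)+\gamma\bigl(d(x,Tx)+d(y,Ty)\bigr)$. Suppose $d(Tx,Ty)<m(x,y)$ for all $x,y\in X$ with $x\ne y$, and that for every $\epsilon>0$ there exist $\delta>0$ and $N\in\mathbb{Z}^+$ such that for all $x,y\in X$, $m(T^Nx,T^Ny)<\delta+\epsilon$ implies $d(T^{N+1}x,T^{N+1}y)\le\epsilon$. Then $T$ has a unique fixed point $z$, and for every $x\in X$ the Picard iterates $T^nx$ $(n\in\mathbb{N})$ converge to $z$ in the strong sense.
   Context: Let $X$ be a nonempty set, $d:X\times X\to[0,\infty)$, and $\nu\in\mathbb{N}$. $(X,d)$ is a $\nu$-generalized metric space if: (1) $d(x,y)=0$ iff $x=y$; (2) $d(x,y)=d(y,x)$ for all $x,y$; (3) $d(x,y)\le d(x,u_1)+d(u_1,u_2)+\dots+d(u_\nu,y)$ for every set $\{x,u_1,\dots,u_\nu,y\}$ of $\nu+2$ pairwise distinct elements of $X$. A sequence $\{x_n\}$ in $X$ is Cauchy if $\lim_{n\to\infty}\sup\{d(x_n,x_{n+1+m}): m\in\mathbb{Z}^+\}=0$ ($\mathbb{Z}^+$ the nonnegative integers). $\{x_n\}$ converges to $x$ if $d(x,x_n)\to0$; it converges to $x$ in the strong sense if it is Cauchy and converges to $x$. $X$ is complete if every Cauchy sequence in $X$ converges. $T$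 is sequentially continuous if $\{Tx_n\}$ converges to $Tx$ whenever $\{x_n\}$ converges to $x$. $T$ is asymptotically regular if $d(T^nx,T^{n+1}x)+d(T^nx,T^{n+2}x)\to0$ for every $x\in X$. $T^0$ is the identity and $T^n$ the $n$-th iterate. *)

theory Defs
  imports "HOL-Analysis.Analysis"
begin

fun path_len :: "('a \<Rightarrow> 'a \<Rightarrow> real) \<Rightarrow> 'a list \<Rightarrow> real" where
  "path_len d (a # b # rest) = d a b + path_len d (b # rest)"
| "path_len d _ = 0"

definition gen_metric_space :: "nat \<Rightarrow> 'a set \<Rightarrow> ('a \<Rightarrow> 'a \<Rightarrow> real) \<Rightarrow> bool" where
  "gen_metric_space nu X d \<longleftrightarrow> X \<noteq> {} \<and>
     (\<forall>x\<in>X. \<forall>y\<in>X. d x y \<ge> 0) \<and>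
     (\<forall>x\<in>X. \<forall>y\<in>X. d x y = 0 \<longleftrightarrow> x = y) \<and>
     (\<forall>x\<in>X. \<forall>y\<in>X. d x y = d y x) \<and>
     (\<forall>x\<in>X. \<forall>y\<in>X. \<forall>us. length us = nu \<and> set us \<subseteq> X \<and> distinct (x # us @ [y])
        \<longrightarrow> d x y \<le> path_len d (x # us @ [y]))"

definition gm_Cauchy :: "('a \<Rightarrow> 'a \<Rightarrow> real) \<Rightarrow> (nat \<Rightarrow> 'a) \<Rightarrow> bool" where
  "gm_Cauchy d x \<longleftrightarrow> (\<forall>e>0. \<exists>N. \<forall>n\<ge>N. \<forall>m. d (x n) (x (n + 1 + m)) \<le> e)"

definition gm_converges :: "('a \<Rightarrow> 'a \<Rightarrow> real) \<Rightarrow> (nat \<Rightarrow> 'a) \<Rightarrow> 'a \<Rightarrow> bool" where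
  "gm_converges d x z \<longleftrightarrow> (\<lambda>n. d z (x n)) \<longlonglongrightarrow> 0"

definition gm_converges_strong :: "('a \<Rightarrow> 'a \<Rightarrow> real) \<Rightarrow> (nat \<Rightarrow> 'a) \<Rightarrow> 'a \<Rightarrow> bool" where
  "gm_converges_strong d x z \<longleftrightarrow> gm_Cauchy d x \<and> gm_converges d x z"

definition gm_complete :: "'a set \<Rightarrow> ('a \<Rightarrow> 'a \<Rightarrow> real) \<Rightarrow> bool" where
  "gm_complete X d \<longleftrightarrow> (\<forall>x. (\<forall>n. x n \<in> X) \<and> gm_Cauchy d x \<longrightarrow> (\<exists>z\<in>X. gm_converges d x z))"

definition gm_seq_continuous :: "'a set \<Rightarrow> ('a \<Rightarrow> 'a \<Rightarrow> real) \<Rightarrow> ('a \<Rightarrow> 'a) \<Rightarrow> bool" where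
  "gm_seq_continuous X d T \<longleftrightarrow> (\<forall>x z. (\<forall>n. x n \<in> X) \<and> z \<in> X \<and> gm_converges d x z
      \<longrightarrow> gm_converges d (\<lambda>n. T (x n)) (T z))"

definition gm_asymp_regular :: "'a set \<Rightarrow> ('a \<Rightarrow> 'a \<Rightarrow> real) \<Rightarrow> ('a \<Rightarrow> 'a) \<Rightarrow> bool" where
  "gm_asymp_regular X d T \<longleftrightarrow> (\<forall>x\<in>X.
      (\<lambda>n. d ((T ^^ n) x) ((T ^^ Suc n) x) + d ((T ^^ n) x) ((T ^^ Suc (Suc n)) x)) \<longlonglongrightarrow> 0)"

end

theory Submission
  imports Defs
begin

text \<open>In a \<open>\<nu>\<close>-generalized metric space only the polygonal inequality along \<open>\<nu> + 1\<close> edges through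
  pairwise distinct points is available. On an injective Picard orbit the distances between iterates
  whose indices differ by 1 or 2 tend to 0 (asymptotic regularity). A jump of length \<open>j \<le> \<nu>\<close> is
  realised by an injective zigzag path of exactly \<open>\<nu> + 1\<close> such short edges, and a longer jump
  by \<open>\<nu>\<close> unit edges followed by a shifted copy of a shorter jump, to which the Meir-Keeler
  condition applies; induction on the jump length gives the Cauchy property. Completeness,
  continuity and uniqueness of limits of injective sequences make the limit a fixed point.
  A non-injective orbit is eventually periodic, and asymptotic regularity forces the periodic
  point to be fixed. Uniqueness of the fixed point is immediate from \<open>d (T x) (T y) < m x y\<close>.\<close>

definition short_step :: "nat \<Rightarrow> nat \<Rightarrow> bool" where
  "short_step a b \<longleftrightarrow> a \<noteq> b \<and> a \<le> b + 2 \<and> b \<le> a + 2"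

lemma odd_even_loop:
  fixes M :: nat
  assumes "M \<ge> 1"
  obtains h where "h 0 = 1" "h M = 0" "inj_on h {0..M}" "\<And>q. q < M \<Longrightarrow> short_step (h q) (h (Suc q))"
proof
  \<comment> \<open>odd values \<open>1, 3, \<dots>\<close> on the way up, even values on the way back down to \<open>0\<close>\<close>
  define a where "a = (M + 1) div 2"
  have a: "2 * a = M + 1 \<or> 2 * a = M" unfolding a_def by presburger
  define h where "h q = (if q < a then 2 * q + 1 else 2 * (M - q))" for q
  show "h 0 = 1" "h M = 0" using assms a unfolding h_def by auto
  show "inj_on h {0..M}"
  proof (rule inj_onI)
    fix q r assume "q \<in> {0..M}" "r \<in> {0..M}" "h q = h r"
    moreover have "Suc (2 * u) \<noteq> 2 * v" "2 * v \<noteq> Suc (2 * u)" for u v :: nat by presburger+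
    ultimately show "q = r" unfolding h_def by (auto split: if_splits)
  qed
  show "short_step (h q) (h (Suc q))" if "q < M" for q
  proof -
    consider "Suc q < a" | "Suc q = a" | "a \<le> q" by linarith
    then show ?thesis
    proof cases
      case 1
      then have "h q = 2 * q + 1" "h (Suc q) = 2 * q + 3" unfolding h_def by auto
      then show ?thesis unfolding short_step_def by simp
    next
      case 2
      then have "h q = 2 * q + 1" "h (Suc q) = 2 * (M - Suc q)" unfolding h_def by auto
      then show ?thesis using a 2 unfolding short_step_def by linarith
    next
      case 3
      then have "h q = 2 * (M - q)" "h (Suc q) = 2 * (M - Suc q)" unfolding h_def by auto
      then show ?thesis using that unfolding short_step_def by linarith
    qed
  qed
qed

lemma short_step_path:
  assumes "1 \<le> j" "j \<le> K"
  obtains g where "g 0 = 0" "g (Suc K) = j" "inj_on g {0..Suc K}"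
    "\<And>i. i \<le> K \<Longrightarrow> short_step (g i) (g (Suc i))"
proof -
  define M where "M = Suc K - j"
  have "M \<ge> 1" using assms unfolding M_def by simp
  then obtain h where h0: "h 0 = 1" and hM: "h M = 0" and h_inj: "inj_on h {0..M}"
    and h_step: "\<And>q. q < M \<Longrightarrow> short_step (h q) (h (Suc q))"
    using odd_even_loop by blast
  define g where "g i = (if i < j then i else j + h (i - j))" for i
  show ?thesis
  proof
    show "g 0 = 0" "g (Suc K) = j" using assms hM unfolding g_def M_def by auto
    show "inj_on g {0..Suc K}"
    proof (rule inj_onI)
      fix u v assume "u \<in> {0..Suc K}" "v \<in> {0..Suc K}" and eq: "g u = g v"
      then have uv: "u - j \<in> {0..M}" "v - j \<in> {0..M}" unfolding M_def by auto
      show "u = v"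
      proof (cases "u < j \<or> v < j")
        case True
        with eq show ?thesis unfolding g_def by (auto split: if_splits)
      next
        case False
        with eq have "h (u - j) = h (v - j)" unfolding g_def by simp
        with False show ?thesis using inj_onD[OF h_inj _ uv] by linarith
      qed
    qed
    show "short_step (g i) (g (Suc i))" if "i \<le> K" for i
    proof -
      consider "Suc i < j" | "Suc i = j" | "j \<le> i" by linarith
      then show ?thesis
      proof cases
        case 3
        then have "i - j < M" "Suc i - j = Suc (i - j)" using that unfolding M_def by auto
        with h_step[of "i - j"] 3 show ?thesis unfolding g_def short_step_def by auto
      qed (simp_all add: g_def short_step_def h0)
    qed
  qed
qed

lemma short_step_add: "short_step (n + a) (n + b) \<longleftrightarrow> short_step a b"
  unfolding short_step_def by auto

lemma gm_nonneg: "gen_metric_space nu X d \<Longrightarrow> x \<in> X \<Longrightarrow> y \<in> X \<Longrightarrow> 0 \<le> d x y"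
  unfolding gen_metric_space_def by auto

lemma gm_eq_0_iff: "gen_metric_space nu X d \<Longrightarrow> x \<in> X \<Longrightarrow> y \<in> X \<Longrightarrow> d x y = 0 \<longleftrightarrow> x = y"
  unfolding gen_metric_space_def by blast

lemma gm_commute: "gen_metric_space nu X d \<Longrightarrow> x \<in> X \<Longrightarrow> y \<in> X \<Longrightarrow> d x y = d y x"
  unfolding gen_metric_space_def by blast

lemma path_len_map_upt: "path_len d (map f [0..<Suc k]) = (\<Sum>i<k. d (f i) (f (Suc i)))"
proof (induction k arbitrary: f)
  case 0
  then show ?case by simp
next
  case (Suc k)
  have "map f [0..<Suc (Suc k)] = f 0 # map (f \<circ> Suc) [0..<Suc k]"
    by (simp add: map_upt_Suc del: upt_Suc)
  then have "path_len d (map f [0..<Suc (Suc k)]) = d (f 0) (f 1) + path_len d (map (f \<circ> Suc) [0..<Suc k])"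
    by (simp add: map_upt_Suc del: upt_Suc)
  also have "\<dots> = (\<Sum>i<Suc k. d (f i) (f (Suc i)))"
    using Suc[of "f \<circ> Suc"] by (simp add: comp_def sum.lessThan_Suc_shift del: sum.lessThan_Suc)
  finally show ?case .
qed

lemma gm_triangle_path:
  assumes gms: "gen_metric_space nu X d"
    and fX: "\<And>i. i \<le> Suc nu \<Longrightarrow> f i \<in> X" and inj: "inj_on f {0..Suc nu}"
  shows "d (f 0) (f (Suc nu)) \<le> (\<Sum>i<Suc nu. d (f i) (f (Suc i)))"
proof -
  define us where "us = map f [1..<Suc nu]"
  have "[0..<Suc nu] = 0 # [1..<Suc nu]"
    by (simp add: upt_conv_Cons del: upt_Suc)
  then have path: "f 0 # us @ [f (Suc nu)] = map f [0..<Suc (Suc nu)]"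
    unfolding us_def by simp
  have "distinct (f 0 # us @ [f (Suc nu)])"
    unfolding path using inj by (simp add: distinct_map atLeastLessThanSuc_atLeastAtMost del: upt_Suc)
  moreover have "length us = nu" "set us \<subseteq> X" unfolding us_def using fX by auto
  ultimately have "d (f 0) (f (Suc nu)) \<le> path_len d (f 0 # us @ [f (Suc nu)])"
    using gms fX[of 0] fX[of "Suc nu"] unfolding gen_metric_space_def by blast
  then show ?thesis unfolding path path_len_map_upt .
qed

lemma gm_dist_le_short_step_path:
  fixes x :: "nat \<Rightarrow> 'a" and \<eta> :: real
  assumes gms: "gen_metric_space nu X d" and xX: "\<And>n. x n \<in> X" and inj: "inj x"
    and small: "\<And>a b. n \<le> a \<Longrightarrow> n \<le> b \<Longrightarrow> short_step a b \<Longrightarrow> d (x a) (x b) \<le> \<eta>"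
    and j: "1 \<le> j" "j \<le> nu"
  shows "d (x n) (x (n + j)) \<le> (nu + 1) * \<eta>"
proof -
  obtain g where g0: "g 0 = 0" and g1: "g (Suc nu) = j" and g_inj: "inj_on g {0..Suc nu}"
    and g_step: "\<And>i. i \<le> nu \<Longrightarrow> short_step (g i) (g (Suc i))"
    using short_step_path[OF j] by blast
  define f where "f i = x (n + g i)" for i
  have f_inj: "inj_on f {0..Suc nu}"
  proof (rule inj_onI)
    fix u v assume uv: "u \<in> {0..Suc nu}" "v \<in> {0..Suc nu}" and "f u = f v"
    then have "g u = g v" unfolding f_def by (simp add: inj_eq[OF inj])
    then show "u = v" by (rule inj_onD[OF g_inj _ uv])
  qed
  have "d (f 0) (f (Suc nu)) \<le> (\<Sum>i<Suc nu. d (f i) (f (Suc i)))"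
    by (rule gm_triangle_path[OF gms _ f_inj]) (simp add: f_def xX)
  also have "\<dots> \<le> (\<Sum>i<Suc nu. \<eta>)"
  proof (rule sum_mono)
    fix i assume "i \<in> {..<Suc nu}"
    then have "short_step (n + g i) (n + g (Suc i))" using g_step by (simp add: short_step_add)
    then show "d (f i) (f (Suc i)) \<le> \<eta>" unfolding f_def by (intro small) simp_all
  qed
  finally show ?thesis unfolding f_def g0 g1 by (simp add: add.commute)
qed

lemma gm_dist_le_consecutive_path:
  fixes x :: "nat \<Rightarrow> 'a" and \<eta> :: real
  assumes gms: "gen_metric_space nu X d" and xX: "\<And>n. x n \<in> X" and inj: "inj x"
    and small: "\<And>i. i < nu \<Longrightarrow> d (x (n + i)) (x (Suc (n + i))) \<le> \<eta>"
    and j: "nu < j"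
  shows "d (x n) (x (n + j)) \<le> nu * \<eta> + d (x (n + nu)) (x (n + j))"
proof -
  define f where "f i = (if i \<le> nu then x (n + i) else x (n + j))" for i
  have f_inj: "inj_on f {0..Suc nu}"
    using j unfolding f_def inj_on_def by (auto simp: inj_eq[OF inj])
  have "d (f 0) (f (Suc nu)) \<le> (\<Sum>i<Suc nu. d (f i) (f (Suc i)))"
    by (rule gm_triangle_path[OF gms _ f_inj]) (simp add: f_def xX)
  also have "\<dots> = (\<Sum>i<nu. d (x (n + i)) (x (Suc (n + i)))) + d (x (n + nu)) (x (n + j))"
    by (simp add: f_def)
  also have "\<dots> \<le> (\<Sum>i<nu. \<eta>) + d (x (n + nu)) (x (n + j))"
    using small by (intro add_right_mono sum_mono) simp
  finally show ?thesis using j by (simp add: f_def)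
qed

lemma gm_limit_unique:
  fixes x :: "nat \<Rightarrow> 'a"
  assumes gms: "gen_metric_space nu X d" and nu: "nu \<ge> 1"
    and xX: "\<And>n. x n \<in> X" and inj: "inj x" and yX: "y \<in> X" and wX: "w \<in> X"
    and y: "(\<lambda>n. d y (x n)) \<longlonglongrightarrow> 0" and w: "(\<lambda>n. d w (x n)) \<longlonglongrightarrow> 0"
    and steps: "(\<lambda>n. d (x n) (x (Suc n))) \<longlonglongrightarrow> 0"
  shows "y = w"
proof (rule ccontr)
  assume "y \<noteq> w"
  have "finite (x -` {y, w})" using inj by (intro finite_vimageI) simp_all
  then obtain B where "\<forall>k\<in>x -` {y, w}. k < B" using finite_nat_set_iff_bounded by blast
  then have B: "x k \<noteq> y \<and> x k \<noteq> w" if "k \<ge> B" for k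
    using that by (metis insertCI not_le vimageI)
  \<comment> \<open>the path \<open>y, x n, \<dots>, x (n + \<nu> - 2), w\<close>, whose points are distinct for \<open>n \<ge> B\<close>\<close>
  define f where "f n i = (if i = 0 then y else if i \<le> nu then x (n + i - 1) else w)" for n i
  have bound: "d y w \<le> (\<Sum>i<Suc nu. d (f n i) (f n (Suc i)))" if "n \<ge> B" for n
  proof -
    have x_new: "x (n + i - 1) \<noteq> y \<and> x (n + i - 1) \<noteq> w" if "i \<ge> 1" for i
      using B \<open>n \<ge> B\<close> that by simp
    have f_inj: "inj_on (f n) {0..Suc nu}"
    proof (rule inj_onI)
      fix u v assume "u \<in> {0..Suc nu}" "v \<in> {0..Suc nu}" "f n u = f n v"
      then show "u = v" using \<open>y \<noteq> w\<close> x_new[of u] x_new[of v] unfolding f_def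
        by (auto split: if_splits simp: inj_eq[OF inj])
    qed
    have "d (f n 0) (f n (Suc nu)) \<le> (\<Sum>i<Suc nu. d (f n i) (f n (Suc i)))"
      by (rule gm_triangle_path[OF gms _ f_inj]) (simp add: f_def xX yX wX)
    then show ?thesis unfolding f_def by simp
  qed
  have "(\<lambda>n. \<Sum>i<Suc nu. d (f n i) (f n (Suc i))) \<longlonglongrightarrow> 0"
  proof (rule tendsto_null_sum)
    fix i assume "i \<in> {..<Suc nu}"
    then consider "i = 0" | "0 < i \<and> i < nu" | "i = nu" by fastforce
    then show "(\<lambda>n. d (f n i) (f n (Suc i))) \<longlonglongrightarrow> 0"
    proof cases
      case 1
      then show ?thesis using y nu unfolding f_def by simp
    next
      case 2
      then have "(\<lambda>n. d (f n i) (f n (Suc i))) = (\<lambda>n. d (x (n + (i - 1))) (x (Suc (n + (i - 1)))))"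
        unfolding f_def by (auto simp: Suc_diff_Suc)
      then show ?thesis using LIMSEQ_ignore_initial_segment[OF steps, of "i - 1"] by simp
    next
      case 3
      then have "(\<lambda>n. d (f n i) (f n (Suc i))) = (\<lambda>n. d w (x (n + (nu - 1))))"
        using nu gm_commute[OF gms _ wX] xX unfolding f_def by auto
      then show ?thesis using LIMSEQ_ignore_initial_segment[OF w, of "nu - 1"] by simp
    qed
  qed
  then have "d y w \<le> 0" by (rule LIMSEQ_le_const) (use bound in blast)
  then show False using \<open>y \<noteq> w\<close> gm_nonneg[OF gms yX wX] gm_eq_0_iff[OF gms yX wX] by simp
qed

lemma gm_jump_dist_lt:
  fixes x :: "nat \<Rightarrow> 'a" and \<eta> \<delta> e :: real
  assumes gms: "gen_metric_space nu X d" and nu: "nu \<ge> 1"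
    and xX: "\<And>n. x n \<in> X" and inj: "inj x"
    and "e > 0" "\<eta> > 0" and \<eta>_le: "(real nu + 1) * \<eta> \<le> \<delta>"
    and small: "\<And>a b. n0 \<le> a \<Longrightarrow> n0 \<le> b \<Longrightarrow> short_step a b \<Longrightarrow> d (x a) (x b) \<le> \<eta>"
    and MK: "\<And>a j. n0 \<le> a \<Longrightarrow> d (x a) (x (a + j)) < \<delta> + e \<Longrightarrow> d (x (Suc a)) (x (Suc (a + j))) \<le> e"
  shows "n0 \<le> n \<Longrightarrow> d (x n) (x (n + j)) < \<delta> + e"
proof (induction j arbitrary: n rule: less_induct)
  case (less j)
  have "real nu * \<eta> + \<eta> \<le> \<delta>" using \<eta>_le by (simp add: algebra_simps)
  consider "j = 0" | "1 \<le> j \<and> j \<le> nu" | "nu < j" by linarith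
  then show ?case
  proof cases
    case 1
    have "d (x n) (x n) = 0" using gm_eq_0_iff[OF gms xX xX] by simp
    moreover have "0 \<le> real nu * \<eta>" using \<open>\<eta> > 0\<close> by simp
    ultimately show ?thesis using 1 \<open>e > 0\<close> \<open>\<eta> > 0\<close> \<open>real nu * \<eta> + \<eta> \<le> \<delta>\<close>
      by (simp del: mult_nonneg_nonneg)
  next
    case 2
    have "d (x n) (x (n + j)) \<le> (real nu + 1) * \<eta>"
      using 2 \<open>n0 \<le> n\<close> by (intro gm_dist_le_short_step_path[OF gms xX inj] small) simp_all
    then show ?thesis using \<eta>_le \<open>e > 0\<close> by simp
  next
    case 3
    \<comment> \<open>the last edge of the path is a shifted copy of a shorter jump\<close>
    have "j - nu < j" "n0 \<le> n + nu - 1" using 3 nu \<open>n0 \<le> n\<close> by simp_all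
    then have "d (x (n + nu - 1)) (x (n + nu - 1 + (j - nu))) < \<delta> + e"
      by (rule less)
    moreover have "Suc (n + nu - 1) = n + nu" "Suc (n + nu - 1 + (j - nu)) = n + j"
      using 3 nu by simp_all
    ultimately have last: "d (x (n + nu)) (x (n + j)) \<le> e"
      using MK[OF \<open>n0 \<le> n + nu - 1\<close>] by metis
    have "d (x n) (x (n + j)) \<le> nu * \<eta> + d (x (n + nu)) (x (n + j))"
      using 3 \<open>n0 \<le> n\<close>
      by (intro gm_dist_le_consecutive_path[OF gms xX inj] small) (simp_all add: short_step_def)
    then show ?thesis using last \<open>real nu * \<eta> + \<eta> \<le> \<delta>\<close> \<open>\<eta> > 0\<close> by linarith
  qed
qed

lemma gm_Cauchy_if_Meir_Keeler:
  fixes x :: "nat \<Rightarrow> 'a"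
  assumes gms: "gen_metric_space nu X d" and nu: "nu \<ge> 1"
    and xX: "\<And>n. x n \<in> X" and inj: "inj x"
    and steps1: "(\<lambda>n. d (x n) (x (Suc n))) \<longlonglongrightarrow> 0"
    and steps2: "(\<lambda>n. d (x n) (x (Suc (Suc n)))) \<longlonglongrightarrow> 0"
    and MK: "\<And>\<epsilon>. \<epsilon> > 0 \<Longrightarrow> \<exists>\<delta>>0. \<exists>N. \<forall>a\<ge>N. \<forall>b\<ge>N.
        d (x a) (x b) < \<delta> + \<epsilon> \<longrightarrow> d (x (Suc a)) (x (Suc b)) \<le> \<epsilon>"
  shows "gm_Cauchy d x"
  unfolding gm_Cauchy_def
proof (intro allI impI)
  fix e :: real assume "e > 0"
  then obtain \<delta> N where "\<delta> > 0" and MK_e: "\<forall>a\<ge>N. \<forall>b\<ge>N.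
      d (x a) (x b) < \<delta> + e \<longrightarrow> d (x (Suc a)) (x (Suc b)) \<le> e"
    using MK by blast
  define \<eta> where "\<eta> = \<delta> / (nu + 1)"
  have "\<eta> > 0" "(real nu + 1) * \<eta> \<le> \<delta>"
    using \<open>\<delta> > 0\<close> unfolding \<eta>_def by (simp_all add: field_simps)
  obtain n1 where n1: "\<And>n. n \<ge> n1 \<Longrightarrow> d (x n) (x (Suc n)) < \<eta> \<and> d (x n) (x (Suc (Suc n))) < \<eta>"
    using eventually_conj[OF order_tendstoD(2)[OF steps1 \<open>\<eta> > 0\<close>] order_tendstoD(2)[OF steps2 \<open>\<eta> > 0\<close>]]
    unfolding eventually_sequentially by blast
  define n0 where "n0 = max N n1"
  have small: "d (x a) (x b) \<le> \<eta>" if "n0 \<le> a" "n0 \<le> b" "short_step a b" for a b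
  proof -
    have "b = Suc a \<or> b = Suc (Suc a) \<or> a = Suc b \<or> a = Suc (Suc b)"
      using \<open>short_step a b\<close> unfolding short_step_def by auto
    moreover have "n1 \<le> a" "n1 \<le> b" using that unfolding n0_def by simp_all
    ultimately show ?thesis using n1[of a] n1[of b] gm_commute[OF gms xX xX, of a b]
      by (elim disjE) simp_all
  qed
  have MK_shift: "d (x (Suc a)) (x (Suc (a + j))) \<le> e" if "n0 \<le> a" "d (x a) (x (a + j)) < \<delta> + e" for a j
    using MK_e that unfolding n0_def by simp
  note jump = gm_jump_dist_lt[OF gms nu xX inj \<open>e > 0\<close> \<open>\<eta> > 0\<close> \<open>(real nu + 1) * \<eta> \<le> \<delta>\<close> small MK_shift]
  show "\<exists>N. \<forall>n\<ge>N. \<forall>m. d (x n) (x (n + 1 + m)) \<le> e"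
  proof (intro exI allI impI)
    fix n m assume "Suc n0 \<le> n"
    then obtain a where "n = Suc a" "n0 \<le> a" by (cases n) auto
    then show "d (x n) (x (n + 1 + m)) \<le> e" using MK_shift[of a "Suc m"] jump[where n = a and j = "Suc m"] by simp
  qed
qed

lemma funpow_in_closed: "\<forall>x\<in>X. T x \<in> X \<Longrightarrow> x \<in> X \<Longrightarrow> (T ^^ n) x \<in> X"
  by (induction n) auto

lemma funpow_split: "N \<le> a \<Longrightarrow> (T ^^ a) x = (T ^^ N) ((T ^^ (a - N)) x)"
  by (metis funpow_add le_add_diff_inverse o_apply)

lemma gm_converges_strong_eventually_const:
  assumes gms: "gen_metric_space nu X d" and "z \<in> X" and const: "\<And>n. p \<le> n \<Longrightarrow> x n = z"
  shows "gm_converges_strong d x z"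
proof -
  have "d z z = 0" using gm_eq_0_iff[OF gms \<open>z \<in> X\<close> \<open>z \<in> X\<close>] by simp
  then have "\<forall>\<^sub>F n in sequentially. d z (x n) = 0" "\<forall>n\<ge>p. \<forall>m. d (x n) (x (n + 1 + m)) = 0"
    using const by (auto simp: eventually_sequentially)
  then show ?thesis
    unfolding gm_converges_strong_def gm_Cauchy_def gm_converges_def
    by (auto intro: tendsto_eventually exI[of _ p])
qed

lemma orbit_periodic_point_is_fixed:
  assumes gms: "gen_metric_space nu X d" and orbit: "\<And>n. (T ^^ n) x0 \<in> X"
    and steps: "(\<lambda>n. d ((T ^^ n) x0) ((T ^^ Suc n) x0)) \<longlonglongrightarrow> 0"
    and "p < q" and period: "(T ^^ q) x0 = (T ^^ p) x0"
  shows "T ((T ^^ p) x0) = (T ^^ p) x0"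
proof -
  define y where "y = (T ^^ p) x0"
  define k where "k = q - p"
  have "q = k + p" using \<open>p < q\<close> unfolding k_def by simp
  then have "(T ^^ k) y = y" using period unfolding y_def by (simp add: funpow_add)
  then have iter: "((T ^^ k) ^^ i) y = y" for i by (induction i) simp_all
  have per: "(T ^^ (p + i * k)) x0 = y" for i
  proof -
    have "(T ^^ (p + i * k)) x0 = (T ^^ (k * i + p)) x0" by (simp add: ac_simps)
    also have "\<dots> = ((T ^^ k) ^^ i) y" unfolding y_def funpow_add funpow_mult by simp
    finally show ?thesis using iter by simp
  qed
  have "strict_mono (\<lambda>i. p + i * k)" using \<open>p < q\<close> unfolding k_def by (auto simp: strict_mono_def)
  from LIMSEQ_subseq_LIMSEQ[OF steps this]
  have "(\<lambda>i. d y (T y)) \<longlonglongrightarrow> 0" by (simp add: comp_def per)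
  then have "d y (T y) = 0" by (simp add: LIMSEQ_const_iff)
  moreover have "y \<in> X" "T y \<in> X" using orbit[of p] orbit[of "Suc p"] unfolding y_def by simp_all
  ultimately show ?thesis using gm_eq_0_iff[OF gms] unfolding y_def by metis
qed

lemma orbit_Meir_Keeler:
  fixes \<gamma> :: real
  assumes T_maps: "\<forall>x\<in>X. T x \<in> X" and x0: "x0 \<in> X" and gamma_pos: "\<gamma> > 0"
    and m_def: "\<forall>x y. m x y = d x y + \<gamma> * (d x (T x) + d y (T y))"
    and meir: "\<forall>\<epsilon>>0. \<exists>\<delta>>0. \<exists>N::nat. \<forall>x\<in>X. \<forall>y\<in>X.
        m ((T ^^ N) x) ((T ^^ N) y) < \<delta> + \<epsilon> \<longrightarrow> d ((T ^^ Suc N) x) ((T ^^ Suc N) y) \<le> \<epsilon>"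
    and steps: "(\<lambda>n. d ((T ^^ n) x0) ((T ^^ Suc n) x0)) \<longlonglongrightarrow> 0"
    and "\<epsilon> > 0"
  shows "\<exists>\<delta>>0. \<exists>N. \<forall>a\<ge>N. \<forall>b\<ge>N.
    d ((T ^^ a) x0) ((T ^^ b) x0) < \<delta> + \<epsilon> \<longrightarrow> d ((T ^^ Suc a) x0) ((T ^^ Suc b) x0) \<le> \<epsilon>"
proof -
  obtain \<delta> N where "\<delta> > 0" and MK: "\<forall>x\<in>X. \<forall>y\<in>X.
      m ((T ^^ N) x) ((T ^^ N) y) < \<delta> + \<epsilon> \<longrightarrow> d ((T ^^ Suc N) x) ((T ^^ Suc N) y) \<le> \<epsilon>"
    using meir \<open>\<epsilon> > 0\<close> by blast
  \<comment> \<open>the \<open>\<gamma>\<close>-term of \<open>m\<close> costs at most \<open>\<delta> / 2\<close> once consecutive distances are below \<open>\<eta>\<close>\<close>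
  define \<eta> where "\<eta> = \<delta> / (4 * \<gamma>)"
  have "\<eta> > 0" "\<gamma> * (2 * \<eta>) = \<delta> / 2"
    using \<open>\<delta> > 0\<close> gamma_pos unfolding \<eta>_def by simp_all
  obtain N1 where N1: "\<And>n. N1 \<le> n \<Longrightarrow> d ((T ^^ n) x0) ((T ^^ Suc n) x0) < \<eta>"
    using order_tendstoD(2)[OF steps \<open>\<eta> > 0\<close>] unfolding eventually_sequentially by blast
  have "d ((T ^^ Suc a) x0) ((T ^^ Suc b) x0) \<le> \<epsilon>"
    if "max N N1 \<le> a" "max N N1 \<le> b" and close: "d ((T ^^ a) x0) ((T ^^ b) x0) < \<delta> / 2 + \<epsilon>" for a b
  proof -
    have "\<gamma> * (d ((T ^^ a) x0) ((T ^^ Suc a) x0) + d ((T ^^ b) x0) ((T ^^ Suc b) x0)) < \<gamma> * (2 * \<eta>)"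
      using N1[of a] N1[of b] that gamma_pos by (intro mult_strict_left_mono) simp_all
    then have "m ((T ^^ a) x0) ((T ^^ b) x0) < \<delta> + \<epsilon>"
      using m_def close \<open>\<gamma> * (2 * \<eta>) = \<delta> / 2\<close> by simp
    moreover have a: "(T ^^ a) x0 = (T ^^ N) ((T ^^ (a - N)) x0)"
      and b: "(T ^^ b) x0 = (T ^^ N) ((T ^^ (b - N)) x0)"
      using that by (auto intro: funpow_split)
    ultimately have "d ((T ^^ Suc N) ((T ^^ (a - N)) x0)) ((T ^^ Suc N) ((T ^^ (b - N)) x0)) \<le> \<epsilon>"
      using MK funpow_in_closed[OF T_maps x0] by simp
    moreover have "(T ^^ Suc a) x0 = (T ^^ Suc N) ((T ^^ (a - N)) x0)"
      and "(T ^^ Suc b) x0 = (T ^^ Suc N) ((T ^^ (b - N)) x0)"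
      using a b by simp_all
    ultimately show ?thesis by simp
  qed
  then show ?thesis using \<open>\<delta> > 0\<close> by (intro exI[of _ "\<delta> / 2"] conjI exI[of _ "max N N1"]) auto
qed

lemma orbit_converges_strong_to_fixed_point:
  fixes \<gamma> :: real
  assumes nu_pos: "nu \<ge> 1"
    and gms: "gen_metric_space nu X d"
    and compl: "gm_complete X d"
    and T_maps: "\<forall>x\<in>X. T x \<in> X"
    and cont: "gm_seq_continuous X d T"
    and ar: "gm_asymp_regular X d T"
    and gamma_pos: "\<gamma> > 0"
    and m_def: "\<forall>x y. m x y = d x y + \<gamma> * (d x (T x) + d y (T y))"
    and meir: "\<forall>\<epsilon>>0. \<exists>\<delta>>0. \<exists>N::nat. \<forall>x\<in>X. \<forall>y\<in>X.
        m ((T ^^ N) x) ((T ^^ N) y) < \<delta> + \<epsilon> \<longrightarrow> d ((T ^^ Suc N) x) ((T ^^ Suc N) y) \<le> \<epsilon>"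
    and x0: "x0 \<in> X"
  shows "\<exists>z\<in>X. T z = z \<and> gm_converges_strong d (\<lambda>n. (T ^^ n) x0) z"
proof -
  define x where "x n = (T ^^ n) x0" for n
  have x_eq: "(\<lambda>n. (T ^^ n) x0) = x" unfolding x_def ..
  have xX: "x n \<in> X" for n unfolding x_def using funpow_in_closed[OF T_maps x0] .
  have x_Suc: "x (Suc n) = T (x n)" for n unfolding x_def by simp
  have ar_x: "(\<lambda>n. d (x n) (x (Suc n)) + d (x n) (x (Suc (Suc n)))) \<longlonglongrightarrow> 0"
    using ar x0 unfolding gm_asymp_regular_def x_def by blast
  have steps1: "(\<lambda>n. d (x n) (x (Suc n))) \<longlonglongrightarrow> 0"
    and steps2: "(\<lambda>n. d (x n) (x (Suc (Suc n)))) \<longlonglongrightarrow> 0"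
    by (rule tendsto_sandwich[OF _ _ tendsto_const ar_x]; simp add: gm_nonneg[OF gms xX xX])+
  show ?thesis
  proof (cases "inj x")
    case False
    then obtain p q where "p < q" "x q = x p" unfolding inj_def by (metis linorder_neqE_nat)
    then have fixed: "T (x p) = x p"
      using orbit_periodic_point_is_fixed[OF gms funpow_in_closed[OF T_maps x0]] steps1
      unfolding x_def by blast
    have "x (p + r) = x p" for r by (induction r) (simp_all add: x_Suc fixed)
    then have "x n = x p" if "p \<le> n" for n using that by (metis le_add_diff_inverse)
    then have "gm_converges_strong d x (x p)"
      by (rule gm_converges_strong_eventually_const[OF gms xX])
    then show ?thesis unfolding x_eq using fixed xX by blast
  next
    case True
    have "\<exists>\<delta>>0. \<exists>N. \<forall>a\<ge>N. \<forall>b\<ge>N. d (x a) (x b) < \<delta> + \<epsilon> \<longrightarrow> d (x (Suc a)) (x (Suc b)) \<le> \<epsilon>"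
      if "\<epsilon> > 0" for \<epsilon>
      using orbit_Meir_Keeler[OF T_maps x0 gamma_pos m_def meir _ that] steps1 unfolding x_def by blast
    then have Cauchy: "gm_Cauchy d x"
      by (rule gm_Cauchy_if_Meir_Keeler[OF gms nu_pos xX True steps1 steps2])
    then obtain y where "y \<in> X" and conv: "gm_converges d x y"
      using compl xX unfolding gm_complete_def by blast
    have "(\<lambda>n. d (T y) (x (Suc n))) \<longlonglongrightarrow> 0"
      using cont \<open>y \<in> X\<close> xX conv unfolding gm_seq_continuous_def gm_converges_def x_Suc by blast
    moreover have "(\<lambda>n. d y (x (Suc n))) \<longlonglongrightarrow> 0"
      using conv unfolding gm_converges_def by (rule LIMSEQ_Suc)
    moreover have "inj (\<lambda>n. x (Suc n))" by (intro inj_onI) (auto dest: injD[OF True])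
    ultimately have "y = T y"
      using gm_limit_unique[OF gms nu_pos xX _ \<open>y \<in> X\<close>] LIMSEQ_Suc[OF steps1] T_maps \<open>y \<in> X\<close>
      by blast
    then show ?thesis unfolding x_eq gm_converges_strong_def using \<open>y \<in> X\<close> Cauchy conv by metis
  qed
qed

lemma fixed_point_unique:
  assumes gms: "gen_metric_space nu X d"
    and m_def: "\<forall>x y. m x y = d x y + \<gamma> * (d x (T x) + d y (T y))"
    and contr: "\<forall>x\<in>X. \<forall>y\<in>X. x \<noteq> y \<longrightarrow> d (T x) (T y) < m x y"
    and "w \<in> X" "z \<in> X" "T w = w" "T z = z"
  shows "w = z"
proof (rule ccontr)
  assume "w \<noteq> z"
  then have "d (T w) (T z) < m w z" using contr \<open>w \<in> X\<close> \<open>z \<in> X\<close> by blast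
  moreover have "d w w = 0" "d z z = 0" using gm_eq_0_iff[OF gms] \<open>w \<in> X\<close> \<open>z \<in> X\<close> by simp_all
  ultimately show False using m_def \<open>T w = w\<close> \<open>T z = z\<close> by simp
qed

theorem theorem3p7:
  fixes nu :: nat and X :: "'a set" and d :: "'a \<Rightarrow> 'a \<Rightarrow> real"
    and T :: "'a \<Rightarrow> 'a" and \<gamma> :: real and m :: "'a \<Rightarrow> 'a \<Rightarrow> real"
  assumes nu_pos: "nu \<ge> 1"
    and gms: "gen_metric_space nu X d"
    and compl: "gm_complete X d"
    and T_maps: "\<forall>x\<in>X. T x \<in> X"
    and cont: "gm_seq_continuous X d T"
    and ar: "gm_asymp_regular X d T"
    and gamma_pos: "\<gamma> > 0"
    and m_def: "\<forall>x y. m x y = d x y + \<gamma> * (d x (T x) + d y (T y))"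
    and contr: "\<forall>x\<in>X. \<forall>y\<in>X. x \<noteq> y \<longrightarrow> d (T x) (T y) < m x y"
    and meir: "\<forall>\<epsilon>>0. \<exists>\<delta>>0. \<exists>N::nat. \<forall>x\<in>X. \<forall>y\<in>X.
        m ((T ^^ N) x) ((T ^^ N) y) < \<delta> + \<epsilon> \<longrightarrow> d ((T ^^ Suc N) x) ((T ^^ Suc N) y) \<le> \<epsilon>"
  shows "\<exists>z\<in>X. T z = z \<and> (\<forall>w\<in>X. T w = w \<longrightarrow> w = z)
           \<and> (\<forall>x\<in>X. gm_converges_strong d (\<lambda>n. (T ^^ n) x) z)"
proof -
  note orbit_limit = orbit_converges_strong_to_fixed_point[OF nu_pos gms compl T_maps cont ar gamma_pos m_def meir]
  note unique = fixed_point_unique[OF gms m_def contr]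
  obtain x0 where "x0 \<in> X" using gms unfolding gen_metric_space_def by auto
  then obtain z where "z \<in> X" "T z = z" using orbit_limit by blast
  moreover have "gm_converges_strong d (\<lambda>n. (T ^^ n) x) z" if "x \<in> X" for x
    using orbit_limit[OF that] unique \<open>z \<in> X\<close> \<open>T z = z\<close> by metis
  ultimately show ?thesis using unique by blast
qed

end
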